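(* Let $m \ge 3$ and $l_1\le\cdots\le l_m$ be natural numbers. Then $(B(l_1,\ldots,l_m))^2$ is equitably $k$-choosable for every $k \geq m+1$.
   Context: All graphs are finite and simple. For $m,l_1,\ldots,l_m\in\mathbb{N}$ with $l_1\le\cdots\le l_m$, $B(l_1,\ldots,l_m)$ is the graph with vertex set $\{u\}\cup\{v_{i,j}: i\in[m], j\in[l_i]\}$ in which, for each $i\in[m]$, consecutive vertices in the sequence $u, v_{i,1},\ldots,v_{i,l_i}$ are adjacent (and there are no other edges); i.e., a subdivision of $K_{1,m}$ with paths of lengths $l_1,\ldots,l_m$. For a graph $H$, $H^2$ has vertex set $V(H)$ with two vertices adjacent iff their distance in $H$ is 1 or 2. A $k$-assignment $L$ for a graph $G$ assigns to each vertex $v$ a set $L(v)$ of exactly $k$ colors. An equitable $L$-coloring of $G$ is a proper coloring $f$ with $f(v)\in L(v)$ for all $v$ such that no color is used on more than $\lceil |V(G)|/k\rceil$ vertices. $G$ is equitably $k$-choosable if it has an equitable $L$-coloring for every $k$-assignment $L$. *)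

theory Defs
  imports Complex_Main
begin

text \<open>The spider B(l_1,...,l_m): vertex u is (0,0); vertex v_{i,j} is (i,j)
for 1 <= i <= m, 1 <= j <= l i.\<close>

definition spider_verts :: "nat \<Rightarrow> (nat \<Rightarrow> nat) \<Rightarrow> (nat \<times> nat) set" where
  "spider_verts m l = {(0,0)} \<union> {(i,j). 1 \<le> i \<and> i \<le> m \<and> 1 \<le> j \<and> j \<le> l i}"

text \<open>Position j in the sequence u, v_{i,1}, ..., v_{i,l_i}.\<close>
definition spider_pos :: "nat \<Rightarrow> nat \<Rightarrow> nat \<times> nat" where
  "spider_pos i j = (if j = 0 then (0,0) else (i,j))"

definition spider_adj :: "nat \<Rightarrow> (nat \<Rightarrow> nat) \<Rightarrow> nat \<times> nat \<Rightarrow> nat \<times> nat \<Rightarrow> bool" where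
  "spider_adj m l x y = (\<exists>i. 1 \<le> i \<and> i \<le> m \<and> (\<exists>j. j + 1 \<le> l i \<and>
      ((x = spider_pos i j \<and> y = spider_pos i (j+1)) \<or> (y = spider_pos i j \<and> x = spider_pos i (j+1)))))"

definition square_adj :: "'a set \<Rightarrow> ('a \<Rightarrow> 'a \<Rightarrow> bool) \<Rightarrow> 'a \<Rightarrow> 'a \<Rightarrow> bool" where
  "square_adj V adj x y = (x \<in> V \<and> y \<in> V \<and> x \<noteq> y \<and>
      (adj x y \<or> (\<exists>z\<in>V. adj x z \<and> adj z y)))"

definition is_k_assignment :: "'a set \<Rightarrow> nat \<Rightarrow> ('a \<Rightarrow> nat set) \<Rightarrow> bool" where
  "is_k_assignment V k L = (\<forall>v\<in>V. finite (L v) \<and> card (L v) = k)"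

definition equitable_L_coloring ::
    "'a set \<Rightarrow> ('a \<Rightarrow> 'a \<Rightarrow> bool) \<Rightarrow> nat \<Rightarrow> ('a \<Rightarrow> nat set) \<Rightarrow> ('a \<Rightarrow> nat) \<Rightarrow> bool" where
  "equitable_L_coloring V adj k L f =
     ((\<forall>v\<in>V. f v \<in> L v) \<and>
      (\<forall>x\<in>V. \<forall>y\<in>V. adj x y \<longrightarrow> f x \<noteq> f y) \<and>
      (\<forall>c. card {v\<in>V. f v = c} \<le> nat \<lceil>real (card V) / real k\<rceil>))"

definition equitably_choosable :: "'a set \<Rightarrow> ('a \<Rightarrow> 'a \<Rightarrow> bool) \<Rightarrow> nat \<Rightarrow> bool" where
  "equitably_choosable V adj k =
     (\<forall>L. is_k_assignment V k L \<longrightarrow> (\<exists>f. equitable_L_coloring V adj k L f))"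

end

theory Submission
  imports Defs
begin

text \<open>Following Kostochka, Pelsmajer and West: let S be a set of k vertices which, listed by
increasing number of neighbours outside S, have at most 0, 1, ..., k - 1 such neighbours. Then
an equitable L-colouring of G - S extends greedily to G, each colour class growing by at most
one vertex, so G is equitably coloured as well. The square of a spider with fewer than k legs
and more than k vertices always has such a set S. If some leg has at least three vertices, cut
k vertices off the ends of the legs, at least three of them from that leg; the cut vertices at
distance 2 and 3 from the rest have at most one and no neighbour outside S, and the remaining
vertices of S have at most two, except those next to the centre, which are few. The remaining
sub-spider is handled by induction. If all legs have at most two vertices, S can be chosen so
that at most k vertices remain, and these are coloured directly.\<close>

definition outdeg :: "('a \<Rightarrow> 'a \<Rightarrow> bool) \<Rightarrow> 'a set \<Rightarrow> 'a \<Rightarrow> nat" where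
  "outdeg R W x = card {w\<in>W. R x w}"

lemma outdeg_le_card: "finite W \<Longrightarrow> outdeg R W x \<le> card W"
  unfolding outdeg_def by (intro card_mono) auto

text \<open>The ordering condition on a k-set S, stated without choosing the order: a vertex x with
d = outdeg x fits at position k + 1 - card {y. d \<le> outdeg y} of a listing of S by increasing
outdegree, which requires d \<le> k - card {y. d \<le> outdeg y}.\<close>

definition peelable :: "('a \<Rightarrow> 'a \<Rightarrow> bool) \<Rightarrow> 'a set \<Rightarrow> 'a set \<Rightarrow> nat \<Rightarrow> bool" where
  "peelable R V S k \<longleftrightarrow> S \<subseteq> V \<and> card S = k \<and>
     (\<forall>x\<in>S. card {y\<in>S. outdeg R (V - S) x \<le> outdeg R (V - S) y} + outdeg R (V - S) x \<le> k)"

lemma greedy_injective_extension: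
  fixes d :: "'a \<Rightarrow> nat"
  assumes "finite S" "finite W" "S \<inter> W = {}"
    and "\<forall>x\<in>S. card {y\<in>S. d x \<le> d y} + d x \<le> k"
    and "\<forall>x\<in>S. card (f ` {w\<in>W. R x w}) \<le> d x"
    and "is_k_assignment S k L"
  shows "\<exists>g. (\<forall>w\<in>W. g w = f w) \<and> inj_on g S \<and>
           (\<forall>v\<in>S. g v \<in> L v \<and> (\<forall>w\<in>W. R v w \<longrightarrow> g v \<noteq> f w))"
  using assms
proof (induction "card S" arbitrary: S)
  case 0
  then show ?case by (intro exI[of _ f]) auto
next
  case (Suc n)
  then have "S \<noteq> {}" by auto
  then obtain x where x: "x \<in> S" "\<forall>y\<in>S. d x \<le> d y"
    using ex_has_least_nat[of "\<lambda>x. x \<in> S" _ d] by blast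
  let ?S = "S - {x}"
  have ord_rest: "\<forall>x'\<in>?S. card {y\<in>?S. d x' \<le> d y} + d x' \<le> k"
  proof
    fix x' assume "x' \<in> ?S"
    have "card {y\<in>?S. d x' \<le> d y} \<le> card {y\<in>S. d x' \<le> d y}"
      using Suc.prems(1) by (intro card_mono) auto
    then show "card {y\<in>?S. d x' \<le> d y} + d x' \<le> k" using Suc.prems(4) \<open>x' \<in> ?S\<close> by fastforce
  qed
  have "\<exists>g. (\<forall>w\<in>W. g w = f w) \<and> inj_on g ?S \<and>
          (\<forall>v\<in>?S. g v \<in> L v \<and> (\<forall>w\<in>W. R v w \<longrightarrow> g v \<noteq> f w))"
    by (rule Suc.hyps(1)) (use Suc.hyps(2) Suc.prems x(1) ord_rest in \<open>auto simp: is_k_assignment_def\<close>)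
  then obtain g where g: "\<forall>w\<in>W. g w = f w" "inj_on g ?S"
      "\<forall>v\<in>?S. g v \<in> L v \<and> (\<forall>w\<in>W. R v w \<longrightarrow> g v \<noteq> f w)"
    by blast
  let ?F = "f ` {w\<in>W. R x w} \<union> g ` ?S"
  have "{y\<in>S. d x \<le> d y} = S" using x by auto
  then have "card S + d x \<le> k" using Suc.prems(4) x(1) by force
  moreover have "card ?F \<le> d x + card ?S"
    using card_Un_le[of "f ` {w\<in>W. R x w}" "g ` ?S"] card_image_le[of ?S g] Suc.prems(1,5) x(1)
    by fastforce
  moreover have "card ?S < card S" using Suc.prems(1) x(1) by (rule card_Diff1_less)
  ultimately have "card ?F < card (L x)" using Suc.prems(6) x(1) by (simp add: is_k_assignment_def)
  moreover have "finite ?F" using Suc.prems(1,2) by simp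
  ultimately have "\<not> L x \<subseteq> ?F" by (meson card_mono leD)
  then obtain c where c: "c \<in> L x" "c \<notin> ?F" by blast
  have "x \<notin> W" using Suc.prems(3) x(1) by auto
  moreover have "inj_on (g(x := c)) S"
    using g(2) c(2) x(1) by (auto simp: inj_on_def)
  ultimately show ?case
    using g c x(1) by (intro exI[of _ "g(x := c)"]) auto
qed

lemma card_upset_add_le:
  fixes d :: "'a \<Rightarrow> nat"
  assumes "finite S" "T \<subseteq> S" "d x \<le> card T" "\<forall>y\<in>T. d y < d x"
  shows "card {y\<in>S. d x \<le> d y} + d x \<le> card S"
proof -
  have "card {y\<in>S. d x \<le> d y} \<le> card (S - T)"
    using assms(1,4) by (intro card_mono) auto
  then show ?thesis
    using assms(1-3) card_Diff_subset[of T S] card_mono[of S T] finite_subset by fastforce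
qed

lemma card_upset_add_le_cover:
  fixes d :: "'a \<Rightarrow> nat"
  assumes "finite U" "{y\<in>S. d x \<le> d y} \<subseteq> U" "card U + d x \<le> k"
  shows "card {y\<in>S. d x \<le> d y} + d x \<le> k"
  using card_mono[OF assms(1,2)] assms(3) by linarith

lemma card_upset_add_le_two_low:
  fixes d :: "'a \<Rightarrow> nat"
  assumes "finite S" "p \<in> S" "q \<in> S" "p \<noteq> q" "d p \<le> 1" "d q = 0" "d x \<le> 2"
  shows "card {y\<in>S. d x \<le> d y} + d x \<le> card S"
proof -
  obtain T where "T \<subseteq> {p,q}" "d x \<le> card T" "\<forall>y\<in>T. d y < d x"
  proof -
    consider "d x = 0" | "d x = 1" | "d x = 2" using assms(7) by linarith
    then show ?thesis
      by cases (use that[of "{}"] that[of "{q}"] that[of "{p,q}"] assms(4-6) in simp_all)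
  qed
  then show ?thesis using card_upset_add_le[OF assms(1)] assms(2,3) by blast
qed

lemma card_upset_add_le_one_hub:
  fixes d :: "'a \<Rightarrow> nat"
  assumes "finite S" "card S = k" "finite U" "x \<in> S"
    and "\<forall>y\<in>S. y \<noteq> u \<longrightarrow> d y \<le> 1" "\<forall>y\<in>S. 1 \<le> d y \<longrightarrow> y \<in> insert u U"
    and "card U + 2 \<le> k" "d u + 1 \<le> k"
  shows "card {y\<in>S. d x \<le> d y} + d x \<le> k"
proof -
  consider "d x = 0" | "d x = 1" | "2 \<le> d x" by linarith
  then show ?thesis
  proof cases
    case 1
    then show ?thesis using card_upset_add_le[OF assms(1), of "{}" d x] assms(2) by simp
  next
    case 2
    have "{y\<in>S. d x \<le> d y} \<subseteq> insert u U" using assms(6) 2 by auto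
    moreover have "card (insert u U) \<le> card U + 1" using assms(3) by (simp add: card_insert_if)
    ultimately show ?thesis
      by (intro card_upset_add_le_cover[of "insert u U"]) (use assms(3,7) 2 in auto)
  next
    case 3
    then have "x = u" using assms(4,5) by force
    moreover have "{y\<in>S. d x \<le> d y} \<subseteq> {u}" using assms(5) 3 by force
    ultimately show ?thesis by (intro card_upset_add_le_cover[of "{u}"]) (use assms(8) in auto)
  qed
qed

lemma card_upset_add_le_two_hubs:
  fixes d :: "'a \<Rightarrow> nat"
  assumes "finite S" "card S = k" "3 \<le> k" "x \<in> S" "z \<in> S" "d z = 0"
    and "\<forall>y\<in>S. y \<notin> {u,v} \<longrightarrow> d y \<le> 1" "d v + 2 \<le> k" "d u + 1 \<le> k"
  shows "card {y\<in>S. d x \<le> d y} + d x \<le> k"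
proof -
  consider "d x = 0" | "d x = 1" | "2 \<le> d x" "d x + 2 \<le> k" | "k < d x + 2" by linarith
  then show ?thesis
  proof cases
    case 1
    then show ?thesis using card_upset_add_le[OF assms(1), of "{}" d x] assms(2) by simp
  next
    case 2
    then show ?thesis using card_upset_add_le[OF assms(1), of "{z}" d x] assms(2,5,6) by simp
  next
    case 3
    have "{y\<in>S. d x \<le> d y} \<subseteq> {u,v}" using assms(7) 3(1) by force
    moreover have "card {u,v} \<le> 2" by (simp add: card_insert_if)
    ultimately show ?thesis by (intro card_upset_add_le_cover[of "{u,v}"]) (use 3(2) in auto)
  next
    case 4
    then have "x = u" using assms(3,4,7,8) by force
    moreover have "{y\<in>S. d x \<le> d y} \<subseteq> {u}"
    proof
      fix y assume y: "y \<in> {y\<in>S. d x \<le> d y}"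
      then have "y \<in> {u,v}" using assms(3,7) 4 by force
      moreover have "y \<noteq> v" using y assms(8) 4 by auto
      ultimately show "y \<in> {u}" by simp
    qed
    ultimately show ?thesis by (intro card_upset_add_le_cover[of "{u}"]) (use assms(9) in auto)
  qed
qed

lemma equitable_L_coloring_mono:
  assumes "\<And>x y. R' x y \<Longrightarrow> R x y" "equitable_L_coloring V R k L f"
  shows "equitable_L_coloring V R' k L f"
  using assms unfolding equitable_L_coloring_def by blast

lemma nat_ceiling_divide_diff:
  assumes "k \<le> n" "0 < k"
  shows "nat \<lceil>real (n - k) / real k\<rceil> + 1 = nat \<lceil>real n / real k\<rceil>"
proof -
  have "real (n - k) / real k = real n / real k - 1"
    using assms by (simp add: of_nat_diff diff_divide_distrib)
  moreover have "real n / real k \<ge> 1" using assms by simp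
  ultimately show ?thesis by (simp add: ceiling_diff_one nat_diff_distrib')
qed

lemma proper_extension_by_greedy:
  assumes "finite V" "S \<subseteq> V" "symp R" "irreflp R" "is_k_assignment V k L"
    and "\<forall>x\<in>S. card {y\<in>S. outdeg R (V - S) x \<le> outdeg R (V - S) y} + outdeg R (V - S) x \<le> k"
    and "\<forall>v\<in>V - S. f v \<in> L v" "\<forall>x\<in>V - S. \<forall>y\<in>V - S. R x y \<longrightarrow> f x \<noteq> f y"
  shows "\<exists>g. (\<forall>v\<in>V. g v \<in> L v) \<and> (\<forall>x\<in>V. \<forall>y\<in>V. R x y \<longrightarrow> g x \<noteq> g y) \<and>
     (\<forall>c. card {v\<in>V. g v = c} \<le> card {v\<in>V - S. f v = c} + 1)"
proof -
  have "finite S" using assms(1,2) finite_subset by blast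
  moreover have "\<forall>x\<in>S. card (f ` {w\<in>V - S. R x w}) \<le> outdeg R (V - S) x"
    unfolding outdeg_def using assms(1) by (auto intro: card_image_le)
  ultimately obtain g where g: "\<forall>w\<in>V - S. g w = f w" "inj_on g S"
      "\<forall>v\<in>S. g v \<in> L v \<and> (\<forall>w\<in>V - S. R v w \<longrightarrow> g v \<noteq> f w)"
    using greedy_injective_extension[of S "V - S" "outdeg R (V - S)" k f R L] assms
    by (auto simp: is_k_assignment_def)
  have "g x \<noteq> g y" if "x \<in> V" "y \<in> V" "R x y" for x y
  proof -
    have "x \<noteq> y" using that(3) assms(4) by (auto dest: irreflpD)
    moreover have "R y x" by (rule sympD[OF assms(3) that(3)])
    ultimately show ?thesis
      using that g assms(8) by (cases "x \<in> S"; cases "y \<in> S") (force dest: inj_onD)+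
  qed
  moreover have "card {v\<in>V. g v = c} \<le> card {v\<in>V - S. f v = c} + 1" for c
  proof -
    have "{v\<in>V. g v = c} = {v\<in>V - S. f v = c} \<union> {v\<in>S. g v = c}"
      using g(1) assms(2) by auto
    then have "card {v\<in>V. g v = c} \<le> card {v\<in>V - S. f v = c} + card {v\<in>S. g v = c}"
      by (simp add: card_Un_le)
    moreover have "card {v\<in>S. g v = c} \<le> 1"
      using g(2) \<open>finite S\<close> by (auto simp: card_le_Suc0_iff_eq inj_on_def)
    ultimately show ?thesis by linarith
  qed
  moreover have "g v \<in> L v" if "v \<in> V" for v
    using that g assms(7) by (cases "v \<in> S") auto
  ultimately show ?thesis by blast
qed

lemma equitable_coloring_small:
  assumes "finite V" "card V \<le> k" "symp R" "irreflp R" "is_k_assignment V k L"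
  shows "\<exists>f. equitable_L_coloring V R k L f"
proof -
  have "\<forall>x\<in>V. card {y\<in>V. outdeg R (V - V) x \<le> outdeg R (V - V) y} + outdeg R (V - V) x \<le> k"
    using assms(2) by (simp add: outdeg_def)
  then obtain g where g: "\<forall>v\<in>V. g v \<in> L v" "\<forall>x\<in>V. \<forall>y\<in>V. R x y \<longrightarrow> g x \<noteq> g y"
     "\<forall>c. card {v\<in>V. g v = c} \<le> 1"
    using proper_extension_by_greedy[of V V R k L "\<lambda>_. 0"] assms by auto
  have "card {v\<in>V. g v = c} \<le> nat \<lceil>real (card V) / real k\<rceil>" for c
  proof (cases "V = {}")
    case False
    then have "0 < card V" using assms(1) by (simp add: card_gt_0_iff)
    then have "0 < real (card V) / real k" using assms(2) by simp
    then have "1 \<le> nat \<lceil>real (card V) / real k\<rceil>" by linarith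
    then show ?thesis using g(3) le_trans by blast
  qed simp
  then show ?thesis using g unfolding equitable_L_coloring_def by blast
qed

lemma equitable_coloring_peel:
  assumes "finite V" "peelable R V S k" "0 < k" "symp R" "irreflp R" "is_k_assignment V k L"
    and "equitable_L_coloring (V - S) R k L f"
  shows "\<exists>g. equitable_L_coloring V R k L g"
proof -
  have S: "S \<subseteq> V" "card S = k" using assms(2) by (auto simp: peelable_def)
  obtain g where g: "\<forall>v\<in>V. g v \<in> L v" "\<forall>x\<in>V. \<forall>y\<in>V. R x y \<longrightarrow> g x \<noteq> g y"
     "\<forall>c. card {v\<in>V. g v = c} \<le> card {v\<in>V - S. f v = c} + 1"
    using proper_extension_by_greedy[of V S R k L f] assms
    unfolding peelable_def equitable_L_coloring_def by auto
  have "k \<le> card V" using S assms(1) card_mono by blast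
  moreover have "card (V - S) = card V - k"
    using S assms(1) by (simp add: card_Diff_subset finite_subset)
  ultimately have "card {v\<in>V - S. f v = c} + 1 \<le> nat \<lceil>real (card V) / real k\<rceil>" for c
    using assms(3,7) nat_ceiling_divide_diff[of k "card V"]
    unfolding equitable_L_coloring_def by (metis add_le_mono1)
  then have "card {v\<in>V. g v = c} \<le> nat \<lceil>real (card V) / real k\<rceil>" for c
    using g(3) le_trans by blast
  then show ?thesis using g unfolding equitable_L_coloring_def by blast
qed

text \<open>An over-approximation of the square of every spider, with u = (0,0) and v_{i,j} = (i,j).
It ignores leg lengths, so one relation serves for all the sub-spiders met in the induction.\<close>

fun spider_sq :: "nat \<times> nat \<Rightarrow> nat \<times> nat \<Rightarrow> bool" where
  "spider_sq (a,b) (c,d) \<longleftrightarrow> (a,b) \<noteq> (c,d) \<and>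
     ((a = c \<and> 1 \<le> a \<and> 1 \<le> b \<and> 1 \<le> d \<and> (b = d+1 \<or> b = d+2 \<or> d = b+1 \<or> d = b+2)) \<or>
      (a = 0 \<and> b = 0 \<and> 1 \<le> c \<and> (d = 1 \<or> d = 2)) \<or>
      (c = 0 \<and> d = 0 \<and> 1 \<le> a \<and> (b = 1 \<or> b = 2)) \<or>
      (1 \<le> a \<and> 1 \<le> c \<and> b = 1 \<and> d = 1))"

lemma symp_spider_sq: "symp spider_sq"
  unfolding symp_def by (auto elim: spider_sq.elims)

lemma irreflp_spider_sq: "irreflp spider_sq"
  unfolding irreflp_def by auto

lemma spider_adj_imp_spider_sq: "spider_adj m l x y \<Longrightarrow> spider_sq x y"
  unfolding spider_adj_def spider_pos_def by (auto split: if_splits)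

lemma square_adj_spider_imp_spider_sq: "square_adj V (spider_adj m l) x y \<Longrightarrow> spider_sq x y"
proof (unfold square_adj_def, elim conjE disjE bexE)
  assume "spider_adj m l x y" then show "spider_sq x y" by (rule spider_adj_imp_spider_sq)
next
  fix z assume "x \<noteq> y" "spider_adj m l x z" "spider_adj m l z y"
  then show "spider_sq x y" unfolding spider_adj_def spider_pos_def by (auto split: if_splits)
qed

lemma spider_verts_eq: "spider_verts m l = insert (0,0) (Sigma {1..m} (\<lambda>i. {1..l i}))"
  by (auto simp: spider_verts_def)

lemma finite_spider_verts: "finite (spider_verts m l)"
  by (simp add: spider_verts_eq)

lemma card_spider_verts: "card (spider_verts m l) = 1 + sum l {1..m}"
  by (simp add: spider_verts_eq card_SigmaI)

lemma spider_verts_mono: "(\<And>i. g i \<le> l i) \<Longrightarrow> spider_verts m g \<subseteq> spider_verts m l"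
  unfolding spider_verts_def using order_trans by fastforce

lemma exists_decrease_sum:
  fixes f :: "'a \<Rightarrow> nat"
  assumes "finite I" "r \<le> sum f I"
  shows "\<exists>g. (\<forall>i. g i \<le> f i) \<and> (\<forall>i. i \<notin> I \<longrightarrow> g i = f i) \<and> (\<Sum>i\<in>I. f i - g i) = r"
  using assms
proof (induction I arbitrary: r rule: finite_induct)
  case empty
  then show ?case by (intro exI[of _ f]) auto
next
  case (insert a F)
  let ?t = "min r (f a)"
  have "r - ?t \<le> sum f F" using insert by auto
  then obtain g where g: "\<forall>i. g i \<le> f i" "\<forall>i. i \<notin> F \<longrightarrow> g i = f i" "(\<Sum>i\<in>F. f i - g i) = r - ?t"
    using insert.IH by blast
  let ?g = "g(a := f a - ?t)"
  have "(\<Sum>i\<in>F. f i - ?g i) = (\<Sum>i\<in>F. f i - g i)"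
    using insert.hyps(2) by (intro sum.cong) auto
  then have "(\<Sum>i\<in>insert a F. f i - ?g i) = r"
    using insert.hyps g(3) by simp
  then show ?case
    using g insert.hyps by (intro exI[of _ ?g]) auto
qed

lemma exists_leg_cut:
  fixes l :: "nat \<Rightarrow> nat"
  assumes "3 \<le> k" "i0 \<in> {1..m}" "3 \<le> l i0" "k \<le> sum l {1..m}"
  shows "\<exists>g. (\<forall>i. g i \<le> l i) \<and> (\<Sum>i\<in>{1..m}. l i - g i) = k \<and> g i0 + 3 \<le> l i0"
proof -
  define f where "f = l(i0 := l i0 - 3)"
  have f_sum: "(\<Sum>i\<in>{1..m}. l i - f i) = 3"
    using assms(2,3) by (simp add: f_def sum.remove)
  then have "k - 3 \<le> sum f {1..m}"
    using assms(2,4) by (simp add: f_def sum.remove)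
  then obtain g where g: "\<forall>i. g i \<le> f i" "(\<Sum>i\<in>{1..m}. f i - g i) = k - 3"
    using exists_decrease_sum[of "{1..m}" "k - 3" f] by auto
  have fl: "\<forall>i. f i \<le> l i" by (simp add: f_def)
  have "(\<Sum>i\<in>{1..m}. l i - g i) = (\<Sum>i\<in>{1..m}. (l i - f i) + (f i - g i))"
    using g(1) fl by (intro sum.cong) (auto simp: le_trans)
  also have "\<dots> = k" using f_sum g(2) assms(1) by (simp add: sum.distrib)
  finally have "(\<Sum>i\<in>{1..m}. l i - g i) = k" .
  moreover have "g i0 \<le> l i0 - 3" using g(1) by (metis f_def fun_upd_same)
  moreover have "\<forall>i. g i \<le> l i" using g(1) fl le_trans by blast
  ultimately show ?thesis using assms(3) by auto
qed

lemma outdeg_spider_sq_inner: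
  assumes "g i < j" "2 \<le> j"
  shows "outdeg spider_sq (spider_verts m g) (i,j) \<le> 2"
proof -
  have "outdeg spider_sq (spider_verts m g) (i,j) \<le> card {(i, j - 1), spider_pos i (j - 2)}"
    unfolding outdeg_def using assms by (intro card_mono) (auto simp: spider_verts_def spider_pos_def)
  also have "\<dots> \<le> 2" by (simp add: card_insert_le_m1)
  finally show ?thesis .
qed

lemma outdeg_spider_sq_first:
  assumes "g i = 0"
  shows "outdeg spider_sq (spider_verts m g) (i,1) \<le> 1 + card {a\<in>{1..m}. 1 \<le> g a}"
proof -
  have "outdeg spider_sq (spider_verts m g) (i,1)
          \<le> card (insert (0,0) ((\<lambda>a. (a,1::nat)) ` {a\<in>{1..m}. 1 \<le> g a}))"
    unfolding outdeg_def using assms by (intro card_mono) (auto simp: spider_verts_def)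
  also have "\<dots> \<le> 1 + card {a\<in>{1..m}. 1 \<le> g a}"
    using card_insert_le_m1 card_image_le by (simp add: card_insert_if card_image_le le_SucI)
  finally show ?thesis .
qed

lemma outdeg_spider_sq_beyond_2: "outdeg spider_sq (spider_verts m g) (i, g i + 2) \<le> 1"
proof -
  have "outdeg spider_sq (spider_verts m g) (i, g i + 2) \<le> card {spider_pos i (g i)}"
    unfolding outdeg_def by (intro card_mono) (auto simp: spider_verts_def spider_pos_def)
  then show ?thesis by simp
qed

lemma outdeg_spider_sq_beyond_3: "outdeg spider_sq (spider_verts m g) (i, g i + 3) = 0"
proof -
  have "{w\<in>spider_verts m g. spider_sq (i, g i + 3) w} = {}"
    by (auto simp: spider_verts_def)
  then show ?thesis unfolding outdeg_def by (metis card.empty)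
qed

lemma outdeg_spider_sq_gt_2:
  assumes "(a,b) \<in> spider_verts m l - spider_verts m g"
    and "2 < outdeg spider_sq (spider_verts m g) (a,b)"
  shows "a \<in> {1..m}" "1 \<le> l a" "g a = 0" "b = 1"
proof -
  have ab: "a \<in> {1..m}" "g a < b" "b \<le> l a" using assms(1) by (auto simp: spider_verts_def)
  moreover have "\<not> 2 \<le> b" using outdeg_spider_sq_inner[of g a b m] ab(2) assms(2) by linarith
  ultimately show "a \<in> {1..m}" "1 \<le> l a" "g a = 0" "b = 1" by auto
qed

lemma peelable_leg_cut:
  fixes m k i0 :: nat and l g :: "nat \<Rightarrow> nat"
  defines "V \<equiv> spider_verts m l" and "V' \<equiv> spider_verts m g"
  assumes gl: "\<forall>i. g i \<le> l i" and card_cut: "card (V - V') = k"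
    and i0: "i0 \<in> {1..m}" "g i0 + 3 \<le> l i0"
    and legs: "card {i\<in>{1..m}. 1 \<le> l i} < k"
  shows "peelable spider_sq V (V - V') k"
proof -
  let ?S = "V - V'"
  let ?d = "outdeg spider_sq V'"
  have V'V: "V' \<subseteq> V" unfolding V_def V'_def using gl by (intro spider_verts_mono) auto
  have finS: "finite ?S" unfolding V_def by (simp add: finite_spider_verts)
  have p: "(i0, g i0 + 2) \<in> ?S" "(i0, g i0 + 3) \<in> ?S"
    using i0 unfolding V_def V'_def spider_verts_def by auto
  have "card {y\<in>?S. ?d x \<le> ?d y} + ?d x \<le> k" if "x \<in> ?S" for x
  proof (cases "?d x \<le> 2")
    case True
    have "?d (i0, g i0 + 2) \<le> 1" "?d (i0, g i0 + 3) = 0"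
      unfolding V'_def by (rule outdeg_spider_sq_beyond_2 outdeg_spider_sq_beyond_3)+
    then show ?thesis
      using card_upset_add_le_two_low[of ?S _ _ ?d x] finS p True card_cut by simp
  next
    case False
    obtain i j where x: "x = (i,j)" by (cases x)
    define A where "A = {a\<in>{1..m}. 1 \<le> l a \<and> g a = 0}"
    define B where "B = {a\<in>{1..m}. 1 \<le> g a}"
    note high = outdeg_spider_sq_gt_2[of _ _ m l g, folded V_def V'_def]
    have "g i = 0" "j = 1" using high[of i j] that False unfolding x by auto
    then have "?d x \<le> 1 + card B"
      using outdeg_spider_sq_first[of g i m] unfolding x V'_def B_def by simp
    moreover have "card ((\<lambda>a. (a,1::nat)) ` A) \<le> card A"
      by (rule card_image_le) (simp add: A_def)
    moreover have "card A + card B = card (A \<union> B)"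
      by (rule card_Un_disjoint[symmetric]) (auto simp: A_def B_def)
    moreover have "card (A \<union> B) \<le> card {i\<in>{1..m}. 1 \<le> l i}"
      using gl by (intro card_mono) (auto simp: A_def B_def intro: order_trans)
    ultimately have "card ((\<lambda>a. (a,1::nat)) ` A) + ?d x \<le> k" using legs by linarith
    moreover have "{y\<in>?S. ?d x \<le> ?d y} \<subseteq> (\<lambda>a. (a,1)) ` A"
      using high False by (force simp: A_def)
    moreover have "finite ((\<lambda>a. (a,1::nat)) ` A)" by (simp add: A_def)
    ultimately show ?thesis using card_upset_add_le_cover[where d = ?d] by blast
  qed
  then show ?thesis using V'V card_cut unfolding peelable_def by (simp add: double_diff)
qed

lemma card_spider_verts_short_legs:
  assumes "\<forall>i\<in>{1..m}. l i \<le> 2"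
  shows "card (spider_verts m l) = 1 + card {i\<in>{1..m}. 1 \<le> l i} + card {i\<in>{1..m}. l i = 2}"
proof -
  have "sum l {1..m} = (\<Sum>i\<in>{1..m}. (if 1 \<le> l i then 1 else 0) + (if l i = 2 then 1 else 0))"
  proof (rule sum.cong)
    fix i assume "i \<in> {1..m}"
    then have "l i \<le> 2" using assms by blast
    then show "l i = (if 1 \<le> l i then 1 else 0) + (if l i = 2 then 1 else 0)" by auto
  qed simp
  also have "\<dots> = card {i\<in>{1..m}. 1 \<le> l i} + card {i\<in>{1..m}. l i = 2}"
    by (simp add: sum.distrib sum.If_cases Int_def conj_commute)
  finally show ?thesis by (simp add: card_spider_verts)
qed

lemma mem_spider_verts_short_legs:
  assumes "\<forall>i\<in>{1..m}. l i \<le> 2" "(a,b) \<in> spider_verts m l" "(a,b) \<noteq> (0,0)"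
  shows "a \<in> {1..m}" "b \<in> {1,2}" "b \<le> l a"
proof -
  have ab: "a \<in> {1..m}" "1 \<le> b" "b \<le> l a" using assms(2,3) by (auto simp: spider_verts_def)
  moreover have "l a \<le> 2" using assms(1) ab(1) by blast
  ultimately show "a \<in> {1..m}" "b \<in> {1,2}" "b \<le> l a" by auto
qed

lemma outdeg_spider_sq_second_level:
  assumes "W \<subseteq> range (\<lambda>c. (c, 2::nat))" "finite W" "1 \<le> j"
  shows "outdeg spider_sq W (i,j) \<le> 1"
    and "0 < outdeg spider_sq W (i,j) \<Longrightarrow> (i,2) \<in> W \<and> j \<noteq> 2"
proof -
  have sub: "{w\<in>W. spider_sq (i,j) w} \<subseteq> {(i,2)} - {(i,j)}" using assms(1,3) by auto
  then have "outdeg spider_sq W (i,j) \<le> card {(i, 2::nat)}"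
    unfolding outdeg_def by (intro card_mono) auto
  then show "outdeg spider_sq W (i,j) \<le> 1" by simp
  assume "0 < outdeg spider_sq W (i,j)"
  then have "{w\<in>W. spider_sq (i,j) w} \<noteq> {}" unfolding outdeg_def by force
  with sub show "(i,2) \<in> W \<and> j \<noteq> 2" by auto
qed

lemma peelable_short_legs_slack:
  fixes m k :: nat and l :: "nat \<Rightarrow> nat"
  defines "V \<equiv> spider_verts m l"
  assumes short: "\<forall>i\<in>{1..m}. l i \<le> 2" and legs: "card {i\<in>{1..m}. 1 \<le> l i} < k"
    and big: "k \<le> card V" and slack: "card V + 2 \<le> 2 * k"
  shows "\<exists>S. peelable spider_sq V S k \<and> card (V - S) \<le> k"
proof -
  let ?P2 = "(\<lambda>i. (i, 2::nat)) ` {i\<in>{1..m}. l i = 2}"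
  have "card ?P2 = card {i\<in>{1..m}. l i = 2}" by (rule card_image) (auto simp: inj_on_def)
  then have "card V - k \<le> card ?P2"
    using card_spider_verts_short_legs[OF short] legs unfolding V_def by linarith
  then obtain W where W: "W \<subseteq> ?P2" "card W = card V - k"
    by (meson obtain_subset_with_card_n)
  have WV: "W \<subseteq> V" using W(1) unfolding V_def spider_verts_def by auto
  have finV: "finite V" unfolding V_def by (rule finite_spider_verts)
  have finW: "finite W" using W(1) by (rule finite_subset) simp
  have W2: "W \<subseteq> range (\<lambda>c. (c, 2::nat))" using W(1) by auto
  define S where "S = V - W"
  have VS: "V - S = W" using WV by (auto simp: S_def)
  have finS: "finite S" using finV by (simp add: S_def)
  have cardS: "card S = k" using WV W(2) big finW by (simp add: S_def card_Diff_subset)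
  let ?d = "outdeg spider_sq W"
  have cover: "y \<in> insert (0,0) ((\<lambda>w. (fst w, 1)) ` W)" if "y \<in> V" "1 \<le> ?d y" for y
  proof (cases "y = (0,0)")
    case False
    obtain a b where y: "y = (a,b)" by (cases y)
    have "b \<in> {1,2}" using mem_spider_verts_short_legs(2)[OF short] that(1) False
      unfolding y V_def by blast
    moreover have "(a,2) \<in> W \<and> b \<noteq> 2"
      using outdeg_spider_sq_second_level(2)[OF W2 finW, of b a] that(2) calculation
      unfolding y by auto
    ultimately show ?thesis unfolding y by (auto intro: image_eqI[where x = "(a,2)"])
  qed simp
  have "card ((\<lambda>w. (fst w, 1::nat)) ` W) + 2 \<le> k"
    using card_image_le[OF finW, of "\<lambda>w. (fst w, 1::nat)"] W(2) big slack by linarith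
  moreover have "?d (0,0) + 1 \<le> k"
    using outdeg_le_card[OF finW, of spider_sq "(0,0)"] W(2) big slack by linarith
  moreover have "\<forall>y\<in>S. y \<noteq> (0,0) \<longrightarrow> ?d y \<le> 1"
  proof (intro ballI impI)
    fix y assume "y \<in> S" "y \<noteq> (0,0)"
    moreover obtain a b where "y = (a,b)" by (cases y)
    ultimately show "?d y \<le> 1" using outdeg_spider_sq_second_level(1)[OF W2 finW, of b a]
      unfolding S_def V_def spider_verts_def by auto
  qed
  moreover have "\<forall>y\<in>S. 1 \<le> ?d y \<longrightarrow> y \<in> insert (0,0) ((\<lambda>w. (fst w, 1)) ` W)"
    using cover by (auto simp: S_def)
  ultimately have "card {y\<in>S. ?d x \<le> ?d y} + ?d x \<le> k" if "x \<in> S" for x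
    using card_upset_add_le_one_hub[OF finS cardS _ that] finW by blast
  then have "peelable spider_sq V S k" using cardS VS by (simp add: peelable_def S_def)
  moreover have "card (V - S) \<le> k" using VS W(2) big slack by simp
  ultimately show ?thesis by blast
qed

lemma outdeg_spider_sq_tight_cut:
  fixes B :: "nat set" and i1 i2 :: nat
  defines "W \<equiv> insert (i2,2) ((\<lambda>i. (i, 1::nat)) ` (B - {i1}))"
  assumes "finite B" "i1 \<noteq> i2"
  shows "outdeg spider_sq W (i1,1) \<le> card (B - {i1})"
    and "i \<noteq> i2 \<Longrightarrow> outdeg spider_sq W (i,2) \<le> 1"
    and "outdeg spider_sq W (i1,2) = 0"
proof -
  have "outdeg spider_sq W (i1,1) \<le> card ((\<lambda>i. (i, 1::nat)) ` (B - {i1}))"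
    unfolding outdeg_def W_def using assms by (intro card_mono) auto
  also have "\<dots> \<le> card (B - {i1})" using assms(2) by (intro card_image_le) simp
  finally show "outdeg spider_sq W (i1,1) \<le> card (B - {i1})" .
  show "outdeg spider_sq W (i,2) \<le> 1" if "i \<noteq> i2"
  proof -
    have "outdeg spider_sq W (i,2) \<le> card {(i, 1::nat)}"
      unfolding outdeg_def W_def using that by (intro card_mono) auto
    then show ?thesis by simp
  qed
  have "{w\<in>W. spider_sq (i1,2) w} = {}" using assms(3) by (auto simp: W_def)
  then show "outdeg spider_sq W (i1,2) = 0" unfolding outdeg_def by (metis card.empty)
qed

lemma peelable_short_legs_tight:
  fixes m k :: nat and l :: "nat \<Rightarrow> nat"
  defines "V \<equiv> spider_verts m l" and "B \<equiv> {i\<in>{1..m}. 1 \<le> l i}"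
  assumes short: "\<forall>i\<in>{1..m}. l i \<le> 2" and legs: "card B < k"
    and k3: "3 \<le> k" and tight: "card V + 1 = 2 * k"
  shows "\<exists>S. peelable spider_sq V S k \<and> card (V - S) \<le> k"
proof -
  have finB: "finite B" by (simp add: B_def)
  have B2: "{i\<in>{1..m}. l i = 2} \<subseteq> B" by (auto simp: B_def)
  then have "card {i\<in>{1..m}. l i = 2} \<le> card B" using finB by (simp add: card_mono)
  then have cardB: "card B = k - 1" "card {i\<in>{1..m}. l i = 2} = card B"
    using card_spider_verts_short_legs[OF short] tight legs unfolding V_def B_def by linarith+
  then have long: "l i = 2" if "i \<in> B" for i
    using card_subset_eq[OF finB B2] that by auto
  have "\<not> card B \<le> Suc 0" using cardB(1) k3 by linarith
  then obtain i1 i2 where i12: "i1 \<in> B" "i2 \<in> B" "i1 \<noteq> i2"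
    using card_le_Suc0_iff_eq[OF finB] by blast
  define W where "W = insert (i2,2) ((\<lambda>i. (i,1::nat)) ` (B - {i1}))"
  let ?d = "outdeg spider_sq W"
  note d = outdeg_spider_sq_tight_cut[OF finB i12(3), folded W_def]
  have finV: "finite V" unfolding V_def by (rule finite_spider_verts)
  have in_V: "(i,1) \<in> V" "(i,2) \<in> V" if "i \<in> B" for i
    using that long[OF that] by (simp_all add: V_def B_def spider_verts_def)
  then have WV: "W \<subseteq> V" using i12(2) by (auto simp: W_def)
  have cardW: "card W = k - 1"
  proof -
    have "card ((\<lambda>i. (i,1::nat)) ` (B - {i1})) = k - 2"
      using cardB(1) i12(1) finB by (subst card_image) (auto simp: inj_on_def card_Diff_singleton)
    then show ?thesis using finB k3 by (auto simp: W_def card_insert_if)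
  qed
  define S where "S = V - W"
  have VS: "V - S = W" using WV by (auto simp: S_def)
  have cardS: "card S = k" using WV cardW tight finV by (simp add: S_def card_Diff_subset finite_subset)
  have finS: "finite S" using finV by (simp add: S_def)
  have "?d y \<le> 1" if "y \<in> S" "y \<notin> {(0,0), (i1,1)}" for y
  proof -
    obtain a b where ab: "y = (a,b)" by (cases y)
    have "a \<in> {1..m}" "b \<in> {1,2}" "b \<le> l a"
      using mem_spider_verts_short_legs[OF short] that unfolding ab S_def V_def by auto
    then have "b = 2 \<and> a \<noteq> i2" using that unfolding ab S_def W_def B_def by auto
    then show ?thesis using d(2)[of a] unfolding ab by simp
  qed
  moreover have "(i1,2) \<in> S" using in_V(2)[OF i12(1)] i12(3) by (auto simp: S_def W_def)
  moreover have "?d (i1,1) + 2 \<le> k"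
    using d(1) cardB(1) i12(1) k3 by (simp add: card_Diff_singleton)
  moreover have "?d (0,0) + 1 \<le> k"
    using outdeg_le_card[of W spider_sq "(0,0)"] cardW k3 finB by (simp add: W_def)
  ultimately have "card {y\<in>S. ?d x \<le> ?d y} + ?d x \<le> k" if "x \<in> S" for x
    using card_upset_add_le_two_hubs[OF finS cardS k3 that, of "(i1,2)"] d(3) by blast
  then have "peelable spider_sq V S k" using cardS VS by (simp add: peelable_def S_def)
  moreover have "card (V - S) \<le> k" using VS cardW by simp
  ultimately show ?thesis by blast
qed

lemma peelable_short_legs:
  fixes m k :: nat and l :: "nat \<Rightarrow> nat"
  defines "V \<equiv> spider_verts m l"
  assumes short: "\<forall>i\<in>{1..m}. l i \<le> 2" and legs: "card {i\<in>{1..m}. 1 \<le> l i} < k"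
    and k3: "3 \<le> k" and big: "k < card V"
  shows "\<exists>S. peelable spider_sq V S k \<and> card (V - S) \<le> k"
proof -
  have "card {i\<in>{1..m}. l i = 2} \<le> card {i\<in>{1..m}. 1 \<le> l i}" by (intro card_mono) auto
  then have "card V + 1 \<le> 2 * k"
    using card_spider_verts_short_legs[OF short] legs unfolding V_def by linarith
  then consider "card V + 2 \<le> 2 * k" | "card V + 1 = 2 * k" by linarith
  then show ?thesis
  proof cases
    case 1
    then show ?thesis using peelable_short_legs_slack[OF short legs] big unfolding V_def by simp
  next
    case 2
    then show ?thesis using peelable_short_legs_tight[OF short legs k3] unfolding V_def by simp
  qed
qed

lemma peelable_long_leg:
  fixes m k i0 :: nat and l :: "nat \<Rightarrow> nat"
  defines "V \<equiv> spider_verts m l"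
  assumes k3: "3 \<le> k" and big: "k < card V" and i0: "i0 \<in> {1..m}" "3 \<le> l i0"
    and legs: "card {i\<in>{1..m}. 1 \<le> l i} < k"
  shows "\<exists>g. (\<forall>i. g i \<le> l i) \<and> sum g {1..m} < sum l {1..m} \<and>
           peelable spider_sq V (V - spider_verts m g) k"
proof -
  have cardV: "card V = 1 + sum l {1..m}" unfolding V_def by (rule card_spider_verts)
  obtain g where g: "\<forall>i. g i \<le> l i" "(\<Sum>i\<in>{1..m}. l i - g i) = k" "g i0 + 3 \<le> l i0"
    using exists_leg_cut[of k i0 m l] i0 k3 big cardV by auto
  have V'V: "spider_verts m g \<subseteq> V" unfolding V_def using g(1) by (intro spider_verts_mono) auto
  have sum_g: "sum l {1..m} = sum g {1..m} + k"
    using g(1,2) sum_subtractf_nat[of "{1..m}" g l] sum_mono[of "{1..m}" g l] by force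
  then have "card (V - spider_verts m g) = k"
    using V'V cardV card_spider_verts[of m g] finite_spider_verts[of m g]
    by (simp add: card_Diff_subset)
  then have "peelable spider_sq V (V - spider_verts m g) k"
    using peelable_leg_cut[of g l m k i0] g i0(1) legs unfolding V_def by blast
  then show ?thesis using g(1) sum_g k3 by auto
qed

lemma spider_sq_equitably_colorable:
  assumes k3: "3 \<le> k"
  shows "card {i\<in>{1..m}. 1 \<le> l i} < k \<Longrightarrow> is_k_assignment (spider_verts m l) k L \<Longrightarrow>
    \<exists>f. equitable_L_coloring (spider_verts m l) spider_sq k L f"
proof (induction "sum l {1..m}" arbitrary: l rule: less_induct)
  case less
  define V where "V = spider_verts m l"
  have finV: "finite V" unfolding V_def by (rule finite_spider_verts)
  have LV: "is_k_assignment V k L" using less.prems(2) unfolding V_def .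
  have restrict: "is_k_assignment U k L" if "U \<subseteq> V" for U
    using LV that by (auto simp: is_k_assignment_def)
  have k0: "0 < k" using k3 by simp
  note colour_small = equitable_coloring_small[OF _ _ symp_spider_sq irreflp_spider_sq]
  note colour_by_peeling =
    equitable_coloring_peel[OF finV _ k0 symp_spider_sq irreflp_spider_sq LV]
  consider "card V \<le> k" | i0 where "k < card V" "i0 \<in> {1..m}" "3 \<le> l i0"
    | "k < card V" "\<forall>i\<in>{1..m}. l i \<le> 2"
    by (cases "card V \<le> k"; cases "\<exists>i0\<in>{1..m}. 3 \<le> l i0")
      (auto simp: not_le less_Suc_eq_le numeral_3_eq_3 numeral_2_eq_2)
  then have "\<exists>f. equitable_L_coloring V spider_sq k L f"
  proof cases
    case 1
    then show ?thesis using colour_small[OF finV _ LV] by blast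
  next
    case (2 i0)
    then obtain g where g: "\<forall>i. g i \<le> l i" "sum g {1..m} < sum l {1..m}"
        and peel: "peelable spider_sq V (V - spider_verts m g) k"
      using peelable_long_leg[of k m l i0] k3 less.prems(1) unfolding V_def by blast
    have V'V: "spider_verts m g \<subseteq> V" unfolding V_def using g(1) by (intro spider_verts_mono) auto
    have "card {i\<in>{1..m}. 1 \<le> g i} \<le> card {i\<in>{1..m}. 1 \<le> l i}"
      using g(1) by (intro card_mono) (auto intro: order_trans)
    then have "card {i\<in>{1..m}. 1 \<le> g i} < k" using less.prems(1) by linarith
    then obtain f where "equitable_L_coloring (spider_verts m g) spider_sq k L f"
      using less.hyps[of g] g(2) restrict[OF V'V] by blast
    moreover have "V - (V - spider_verts m g) = spider_verts m g" using V'V by auto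
    ultimately show ?thesis using colour_by_peeling[OF peel] by simp
  next
    case 3
    then obtain S where S: "peelable spider_sq V S k" "card (V - S) \<le> k"
      using peelable_short_legs[of m l k] less.prems(1) k3 unfolding V_def by blast
    moreover obtain f where "equitable_L_coloring (V - S) spider_sq k L f"
      using colour_small[of "V - S" k L] finV S(2) restrict[of "V - S"] by auto
    ultimately show ?thesis using colour_by_peeling by blast
  qed
  then show ?case unfolding V_def .
qed

theorem theorem2p1:
  fixes m k :: nat and l :: "nat \<Rightarrow> nat"
  assumes "m \<ge> 3"
    and "\<And>i. 1 \<le> i \<Longrightarrow> i \<le> m \<Longrightarrow> l i \<ge> 1"
    and "\<And>i j. 1 \<le> i \<Longrightarrow> i \<le> j \<Longrightarrow> j \<le> m \<Longrightarrow> l i \<le> l j"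
    and "k \<ge> m + 1"
  shows "equitably_choosable (spider_verts m l)
           (square_adj (spider_verts m l) (spider_adj m l)) k"
  unfolding equitably_choosable_def
proof (intro allI impI)
  fix L assume L: "is_k_assignment (spider_verts m l) k L"
  have "{i\<in>{1..m}. 1 \<le> l i} = {1..m}" using assms(2) by auto
  then have "card {i\<in>{1..m}. 1 \<le> l i} < k" using assms(4) by simp
  then obtain f where "equitable_L_coloring (spider_verts m l) spider_sq k L f"
    using spider_sq_equitably_colorable[of k m l L] assms(1,4) L by auto
  then have "equitable_L_coloring (spider_verts m l)
               (square_adj (spider_verts m l) (spider_adj m l)) k L f"
    by (rule equitable_L_coloring_mono[rotated]) (rule square_adj_spider_imp_spider_sq)
  then show "\<exists>f. equitable_L_coloring (spider_verts m l)
                  (square_adj (spider_verts m l) (spider_adj m l)) k L f" by blast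
qed

end
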